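(* A rational $\mathfrak{sl}(2)$-module is indecomposable as an $\mathfrak{sl}(2)$-module if and only if it is $\mathcal R$-indecomposable. Moreover, every indecomposable rational module is a generalized Casimir module. Hence the classes of indecomposable objects in $\mathcal R$, of $\mathcal R$-indecomposable objects of $\mathcal R$, of $\mathcal{RC}^\bullet$-indecomposable objects of $\mathcal{RC}^\bullet$ and of indecomposable objects of $\mathcal{RC}^\bullet$ all coincide.
   Context: $\mathfrak{sl}(2)$ has basis $L_{-1}=f$, $L_0=-\tfrac12 h$, $L_1=-e$ for a Chevalley basis $e,f,h$. An $\mathfrak{sl}(2)$-module $(V,\rho)$ is a $\mathbb{C}[z]$-module via $z\cdot v=\rho(L_0)v$; it is rational if it is, with this structure, a finite-dimensional $\mathbb{C}(z)$-vector space. $\mathcal R$ is the full subcategory of rational modules. Casimir operator: $C_\rho=\rho(L_0)(\rho(L_0)-1)-\rho(L_{-1})\rho(L_1)$; a module is generalized Casimir (of level $\mu$) if $(C_\rho-\mu)^n=0$ for some $\mu\in\mathbb{C}$, $n\ge1$; $\mathcal{RC}^\bullet$ is the full subcategory of rational generalized Casimir modules. A rational module $W$ is indecomposable if it is nonzero and not a direct sum of two nonzero $\mathfrak{sl}(2)$-submodules, and $\mathcal R$-indecomposable (resp. $\mathcal{RC}^\bullet$-indecomposable) if it is nonzero and not a direct sum of two nonzero rational (resp. rational generalized Casimir) submodules. *)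

theory Defs
  imports "HOL-Computational_Algebra.Polynomial"
begin

definition sl2_module ::
  "(complex \<Rightarrow> 'v::ab_group_add \<Rightarrow> 'v) \<Rightarrow> ('v \<Rightarrow> 'v) \<Rightarrow> ('v \<Rightarrow> 'v) \<Rightarrow> ('v \<Rightarrow> 'v) \<Rightarrow> bool" where
  "sl2_module sc e f h \<longleftrightarrow>
     vector_space sc \<and>
     Vector_Spaces.linear sc sc e \<and> Vector_Spaces.linear sc sc f \<and> Vector_Spaces.linear sc sc h \<and>
     (\<forall>v. h (e v) - e (h v) = sc 2 (e v)) \<and>
     (\<forall>v. h (f v) - f (h v) = sc (-2) (f v)) \<and>
     (\<forall>v. e (f v) - f (e v) = h v)"

definition Lm1 :: "('v \<Rightarrow> 'v) \<Rightarrow> 'v \<Rightarrow> 'v" where "Lm1 f = f"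
definition L0 :: "(complex \<Rightarrow> 'v \<Rightarrow> 'v) \<Rightarrow> ('v \<Rightarrow> 'v) \<Rightarrow> 'v \<Rightarrow> 'v" where
  "L0 sc h = (\<lambda>v. sc (-1/2) (h v))"
definition L1 :: "('v::ab_group_add \<Rightarrow> 'v) \<Rightarrow> 'v \<Rightarrow> 'v" where "L1 e = (\<lambda>v. - e v)"

definition poly_act ::
  "(complex \<Rightarrow> 'v::ab_group_add \<Rightarrow> 'v) \<Rightarrow> ('v \<Rightarrow> 'v) \<Rightarrow> complex poly \<Rightarrow> 'v \<Rightarrow> 'v" where
  "poly_act sc T p v = (\<Sum>i\<le>degree p. sc (coeff p i) ((T ^^ i) v))"

definition casimir ::
  "(complex \<Rightarrow> 'v::ab_group_add \<Rightarrow> 'v) \<Rightarrow> ('v \<Rightarrow> 'v) \<Rightarrow> ('v \<Rightarrow> 'v) \<Rightarrow> ('v \<Rightarrow> 'v) \<Rightarrow> 'v \<Rightarrow> 'v" where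
  "casimir sc e f h = (\<lambda>v. L0 sc h (L0 sc h v - v) - Lm1 f (L1 e v))"

definition sl2_submodule ::
  "(complex \<Rightarrow> 'v::ab_group_add \<Rightarrow> 'v) \<Rightarrow> ('v \<Rightarrow> 'v) \<Rightarrow> ('v \<Rightarrow> 'v) \<Rightarrow> ('v \<Rightarrow> 'v) \<Rightarrow> 'v set \<Rightarrow> bool" where
  "sl2_submodule sc e f h U \<longleftrightarrow>
     module.subspace sc U \<and> e ` U \<subseteq> U \<and> f ` U \<subseteq> U \<and> h ` U \<subseteq> U"

text \<open>Rationality of a submodule U: U is a C[z]-module via z.u = L_0 u. It is a C(z)-vector
  space (i.e. the C[z]-action extends to C(z)) iff every nonzero polynomial acts bijectively
  on U; it is finite-dimensional over C(z) iff there is a finite S \<subseteq> U such that every u \<in> U is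
  a C(z)-linear combination of S, i.e. (clearing a common denominator q \<noteq> 0)
  q(L_0) u = \<Sum>s\<in>S. p_s(L_0) s.\<close>

definition rational ::
  "(complex \<Rightarrow> 'v::ab_group_add \<Rightarrow> 'v) \<Rightarrow> ('v \<Rightarrow> 'v) \<Rightarrow> ('v \<Rightarrow> 'v) \<Rightarrow> ('v \<Rightarrow> 'v) \<Rightarrow> 'v set \<Rightarrow> bool" where
  "rational sc e f h U \<longleftrightarrow>
     sl2_submodule sc e f h U \<and>
     (\<forall>p. p \<noteq> 0 \<longrightarrow> bij_betw (poly_act sc (L0 sc h) p) U U) \<and>
     (\<exists>S. finite S \<and> S \<subseteq> U \<and>
        (\<forall>u\<in>U. \<exists>q c. q \<noteq> 0 \<and>
            poly_act sc (L0 sc h) q u = (\<Sum>s\<in>S. poly_act sc (L0 sc h) (c s) s)))"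

definition gen_casimir ::
  "(complex \<Rightarrow> 'v::ab_group_add \<Rightarrow> 'v) \<Rightarrow> ('v \<Rightarrow> 'v) \<Rightarrow> ('v \<Rightarrow> 'v) \<Rightarrow> ('v \<Rightarrow> 'v) \<Rightarrow> 'v set \<Rightarrow> bool" where
  "gen_casimir sc e f h U \<longleftrightarrow>
     sl2_submodule sc e f h U \<and>
     (\<exists>\<mu> n. n \<ge> 1 \<and> (\<forall>u\<in>U. ((\<lambda>v. casimir sc e f h v - sc \<mu> v) ^^ n) u = 0))"

definition direct_sum :: "'v::ab_group_add set \<Rightarrow> 'v set \<Rightarrow> 'v set \<Rightarrow> bool" where
  "direct_sum U A B \<longleftrightarrow> U = {a + b | a b. a \<in> A \<and> b \<in> B} \<and> A \<inter> B = {0}"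

definition indecomp_wrt ::
  "('v set \<Rightarrow> bool) \<Rightarrow> 'v::ab_group_add set \<Rightarrow> bool" where
  "indecomp_wrt P U \<longleftrightarrow>
     U \<noteq> {0} \<and> \<not> (\<exists>A B. P A \<and> P B \<and> A \<noteq> {0} \<and> B \<noteq> {0} \<and> direct_sum U A B)"

definition indecomposable where
  "indecomposable sc e f h U \<longleftrightarrow> indecomp_wrt (sl2_submodule sc e f h) U"

definition R_indecomposable where
  "R_indecomposable sc e f h U \<longleftrightarrow> indecomp_wrt (rational sc e f h) U"

definition RC_indecomposable where
  "RC_indecomposable sc e f h U \<longleftrightarrow>
     indecomp_wrt (\<lambda>A. rational sc e f h A \<and> gen_casimir sc e f h A) U"

end

theory Submission
  imports Defs "HOL-Computational_Algebra.Computational_Algebra" "HOL-Computational_Algebra.Field_as_Ring"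
begin

text \<open>Over the field \<open>\<complex>(z)\<close>, with \<open>z\<close> acting by \<open>L\<^sub>0\<close>, a rational module is finite
  dimensional and the Casimir operator \<open>C\<close> commutes with \<open>L\<^sub>0\<close>, so some nonzero
  \<open>F(z, X) \<in> \<complex>[z][X]\<close> annihilates \<open>C\<close>. On a rational module \<open>e\<close> is injective (below a
  nonzero \<open>v\<close> with \<open>e v = 0\<close> the vectors \<open>f\<^sup>i v\<close> would be independent over \<open>\<complex>[z]\<close>), and
  \<open>e p(L\<^sub>0) = p(L\<^sub>0 + 1) e\<close>. Hence substituting \<open>z - 1\<close> for \<open>z\<close> in the coefficients
  of \<open>F\<close> gives another annihilator; for \<open>F\<close> of minimal degree in \<open>X\<close> this forces the
  coefficients to be proportional, so \<open>C\<close> is annihilated by a polynomial \<open>g(X)\<close> with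
  constant coefficients. The kernels of coprime factors of \<open>g\<close> split the module into a
  direct sum of submodules, so on an indecomposable module \<open>C\<close> has a single eigenvalue.
  Finally, the projections of a direct sum decomposition commute with \<open>L\<^sub>0\<close>, so direct
  summands of rational modules are rational, which makes the notions of indecomposability agree.\<close>

lemma exists_nontrivial_relation:
  fixes v :: "'i \<Rightarrow> 'j \<Rightarrow> 'a::idom"
  assumes "finite J" "finite I" "card J < card I"
  shows "\<exists>\<beta>. (\<exists>i\<in>I. \<beta> i \<noteq> 0) \<and> (\<forall>j\<in>J. (\<Sum>i\<in>I. \<beta> i * v i j) = 0)"
  using assms
proof (induction J arbitrary: I v rule: finite_induct)
  case empty
  then show ?case by (intro exI[of _ "\<lambda>_. 1"]) (auto simp: card_gt_0_iff)
next
  case (insert j J I v)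
  show ?case
  proof (cases "\<forall>i\<in>I. v i j = 0")
    case True
    with insert show ?thesis by auto
  next
    case False
    then obtain k where k: "k \<in> I" "v k j \<noteq> 0" by auto
    \<comment> \<open>Fraction-free elimination of coordinate \<open>j\<close> by means of row \<open>k\<close>.\<close>
    define I' where "I' = I - {k}"
    define v' where "v' i l = v k j * v i l - v i j * v k l" for i l
    have "finite I'" "card J < card I'"
      using insert k by (auto simp: I'_def)
    from insert.IH[OF this, of v'] obtain \<beta>' where
      \<beta>': "\<exists>i\<in>I'. \<beta>' i \<noteq> 0" "\<forall>l\<in>J. (\<Sum>i\<in>I'. \<beta>' i * v' i l) = 0" by blast
    define \<beta> where "\<beta> i = (if i = k then - (\<Sum>i\<in>I'. \<beta>' i * v i j) else \<beta>' i * v k j)" for i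
    have relation: "(\<Sum>i\<in>I. \<beta> i * v i l) = (\<Sum>i\<in>I'. \<beta>' i * v' i l)" for l
    proof -
      have "(\<Sum>i\<in>I. \<beta> i * v i l) = \<beta> k * v k l + (\<Sum>i\<in>I'. \<beta> i * v i l)"
        unfolding I'_def using k insert.prems by (simp add: sum.remove)
      also have "(\<Sum>i\<in>I'. \<beta> i * v i l) = (\<Sum>i\<in>I'. \<beta>' i * v k j * v i l)"
        by (rule sum.cong) (auto simp: \<beta>_def I'_def)
      also have "\<beta> k * v k l = - (\<Sum>i\<in>I'. \<beta>' i * v i j * v k l)"
        by (simp add: \<beta>_def sum_distrib_right)
      finally show ?thesis
        by (simp add: v'_def algebra_simps sum_subtractf[symmetric] sum.distrib[symmetric])
    qed
    from \<beta>'(1) k have "\<exists>i\<in>I. \<beta> i \<noteq> 0"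
      by (auto simp: \<beta>_def I'_def)
    moreover have "\<forall>l\<in>insert j J. (\<Sum>i\<in>I. \<beta> i * v i l) = 0"
      using \<beta>'(2) by (auto simp: relation v'_def)
    ultimately show ?thesis by blast
  qed
qed

lemma shift_invariant_quotient_const:
  fixes p q :: "complex poly"
  assumes q0: "q \<noteq> 0" and shift: "pcompose q [:-1,1:] * p = q * pcompose p [:-1,1:]"
  shows "\<exists>c. p = smult c q"
proof -
  have eval: "poly q (z - 1) * poly p z = poly q z * poly p (z - 1)" for z
    using arg_cong[OF shift, of "\<lambda>r. poly r z"] by (simp add: poly_pcompose algebra_simps)
  \<comment> \<open>A line \<open>z\<^sub>0 + \<nat>\<close> on which \<open>q\<close> has no root: choose the imaginary part of \<open>z\<^sub>0\<close>
    different from those of the finitely many roots.\<close>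
  have "finite (Im ` {z. poly q z = 0})"
    using poly_roots_finite[OF q0] by simp
  then obtain y where y: "y \<notin> Im ` {z. poly q z = 0}"
    using ex_new_if_finite[OF infinite_UNIV_char_0] by blast
  define z0 where "z0 = Complex 0 y"
  have q_nonzero: "poly q (z0 + of_nat n) \<noteq> 0" for n
    using y by (auto simp: z0_def image_iff)
  define c where "c = poly p z0 / poly q z0"
  have p_eq: "poly p (z0 + of_nat n) = c * poly q (z0 + of_nat n)" for n
  proof (induction n)
    case 0
    then show ?case using q_nonzero[of 0] by (simp add: c_def)
  next
    case (Suc n)
    have "poly q (z0 + of_nat n) * poly p (z0 + of_nat (Suc n)) =
          poly q (z0 + of_nat (Suc n)) * poly p (z0 + of_nat n)"
      using eval[of "z0 + of_nat (Suc n)"] by (simp add: algebra_simps)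
    also have "\<dots> = poly q (z0 + of_nat n) * (c * poly q (z0 + of_nat (Suc n)))"
      using Suc.IH by (simp add: algebra_simps)
    finally show ?case using q_nonzero[of n] by simp
  qed
  have "p - smult c q = 0"
  proof (rule ccontr)
    assume "p - smult c q \<noteq> 0"
    then have "finite {z. poly (p - smult c q) z = 0}" by (rule poly_roots_finite)
    moreover have "range (\<lambda>n::nat. z0 + of_nat n) \<subseteq> {z. poly (p - smult c q) z = 0}"
      using p_eq by auto
    moreover have "infinite (range (\<lambda>n::nat. z0 + of_nat n))"
      by (rule range_inj_infinite) (auto simp: inj_def)
    ultimately show False using finite_subset by blast
  qed
  then show ?thesis by auto
qed

lemma bezout_linear_power:
  fixes r :: "'a::field_gcd poly"
  assumes "poly r \<mu> \<noteq> 0"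
  shows "\<exists>u w. u * [:-\<mu>, 1:] ^ m + w * r = 1"
proof -
  have "prime_elem [:-\<mu>, 1:]" by (rule prime_elem_linear_field_poly) simp
  moreover have "\<not> [:-\<mu>, 1:] dvd r" using assms by (simp add: poly_eq_0_iff_dvd)
  ultimately have "coprime r ([:-\<mu>, 1:] ^ m)"
    by (rule prime_elem_imp_power_coprime)
  then show ?thesis
    using bezout_coefficients_fst_snd by (metis coprime_commute coprime_imp_gcd_eq_1)
qed

lemma proportional_coeffs_factor:
  fixes F :: "'a::field poly poly"
  assumes "lc \<noteq> 0" and proportional: "\<And>i. \<exists>c. coeff F i = smult c lc"
  shows "\<exists>g. degree g \<le> degree F \<and> (\<forall>i. coeff F i = smult (coeff g i) lc)"
proof -
  define g where "g = map_poly (\<lambda>a. coeff a (degree lc) / lead_coeff lc) F"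
  have "coeff F i = smult (coeff g i) lc" for i
  proof -
    obtain c where "coeff F i = smult c lc" using proportional by blast
    moreover have "coeff g i = coeff (coeff F i) (degree lc) / lead_coeff lc"
      unfolding g_def by (rule coeff_map_poly) simp
    ultimately show ?thesis using assms(1) by simp
  qed
  moreover have "degree g \<le> degree F"
    unfolding g_def by (rule map_poly_degree_leq)
  ultimately show ?thesis by blast
qed

section \<open>Projections onto direct summands\<close>

definition proj :: "'v::ab_group_add set \<Rightarrow> 'v set \<Rightarrow> 'v \<Rightarrow> 'v" where
  "proj A B v = (SOME a. a \<in> A \<and> v - a \<in> B)"

lemma direct_sum_sym: "direct_sum U A B \<Longrightarrow> direct_sum U B A"
  unfolding direct_sum_def by (auto simp: Int_commute) (metis add.commute)+

lemma indecomp_wrt_cong: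
  assumes "\<And>A B. direct_sum U A B \<Longrightarrow> P A \<and> P B \<longleftrightarrow> Q A \<and> Q B"
  shows "indecomp_wrt P U \<longleftrightarrow> indecomp_wrt Q U"
  unfolding indecomp_wrt_def using assms by blast

lemma proj_direct_sum:
  assumes "direct_sum UNIV A B"
  shows "proj A B v \<in> A \<and> v - proj A B v \<in> B"
proof -
  obtain a b where "v = a + b" "a \<in> A" "b \<in> B"
    using assms unfolding direct_sum_def by blast
  then have "\<exists>a. a \<in> A \<and> v - a \<in> B" by (intro exI[of _ a]) simp
  then show ?thesis unfolding proj_def by (rule someI_ex)
qed

context module
begin

lemma proj_unique:
  assumes "direct_sum UNIV A B" "subspace A" "subspace B" "a \<in> A" "v - a \<in> B"
  shows "proj A B v = a"
proof -
  note \<pi> = proj_direct_sum[OF assms(1), of v]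
  have "proj A B v - a \<in> A"
    using assms \<pi> by (simp add: subspace_diff)
  moreover have "proj A B v - a \<in> B"
  proof -
    have "(v - a) - (v - proj A B v) \<in> B"
      using subspace_diff[OF assms(3) assms(5) conjunct2[OF \<pi>]] .
    then show ?thesis by simp
  qed
  ultimately have "proj A B v - a \<in> A \<inter> B" by blast
  then have "proj A B v - a = 0"
    using assms(1) unfolding direct_sum_def by blast
  then show ?thesis by simp
qed

lemma module_hom_proj:
  assumes "direct_sum UNIV A B" "subspace A" "subspace B"
  shows "module_hom scale scale (proj A B)"
proof
  note \<pi> = proj_direct_sum[OF assms(1)]
  fix x y c
  have "x + y - (proj A B x + proj A B y) = (x - proj A B x) + (y - proj A B y)"
    by (simp add: algebra_simps)
  also have "\<dots> \<in> B"
    using assms(3) \<pi> by (blast intro: subspace_add)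
  finally show "proj A B (x + y) = proj A B x + proj A B y"
    using assms \<pi> by (intro proj_unique) (simp_all add: subspace_add)
  have "scale c x - scale c (proj A B x) = scale c (x - proj A B x)"
    by (simp add: scale_right_diff_distrib)
  also have "\<dots> \<in> B"
    using assms(3) \<pi> by (blast intro: subspace_scale)
  finally show "proj A B (scale c x) = scale c (proj A B x)"
    using assms \<pi> by (intro proj_unique) (simp_all add: subspace_scale)
qed

lemma proj_commute:
  assumes "direct_sum UNIV A B" "subspace A" "subspace B"
    and "module_hom scale scale \<Phi>" "\<Phi> ` A \<subseteq> A" "\<Phi> ` B \<subseteq> B"
  shows "proj A B (\<Phi> v) = \<Phi> (proj A B v)"
proof (rule proj_unique[OF assms(1-3)])
  note \<pi> = proj_direct_sum[OF assms(1), of v]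
  show "\<Phi> (proj A B v) \<in> A" using \<pi> assms(5) by blast
  have "\<Phi> v - \<Phi> (proj A B v) = \<Phi> (v - proj A B v)"
    using module_hom.diff[OF assms(4)] by simp
  then show "\<Phi> v - \<Phi> (proj A B v) \<in> B" using \<pi> assms(6) by auto
qed

end

section \<open>Polynomials in an endomorphism\<close>

locale module_endo = module s for s :: "'a::comm_ring_1 \<Rightarrow> 'v::ab_group_add \<Rightarrow> 'v" +
  fixes T :: "'v \<Rightarrow> 'v"
  assumes T_add: "T (x + y) = T x + T y" and T_scale: "T (s a x) = s a (T x)"
begin

sublocale T: module_hom s s T
  by unfold_locales (fact T_add T_scale)+

definition act :: "'a poly \<Rightarrow> 'v \<Rightarrow> 'v" where
  "act p v = (\<Sum>i\<le>degree p. s (coeff p i) ((T ^^ i) v))"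

lemma act_eq_sum_lessThan:
  "degree p < N \<Longrightarrow> act p v = (\<Sum>i<N. s (coeff p i) ((T ^^ i) v))"
  unfolding act_def by (rule sum.mono_neutral_left) (auto simp: coeff_eq_0)

lemma act_0 [simp]: "act 0 v = 0"
  by (simp add: act_def)

lemma act_pCons: "act (pCons a p) v = s a v + T (act p v)"
proof -
  have "degree (pCons a p) < Suc (Suc (degree p))"
    using degree_pCons_le[of a p] by auto
  then have "act (pCons a p) v = (\<Sum>i<Suc (Suc (degree p)). s (coeff (pCons a p) i) ((T ^^ i) v))"
    by (rule act_eq_sum_lessThan)
  also have "\<dots> = s a v + (\<Sum>i<Suc (degree p). s (coeff p i) (T ((T ^^ i) v)))"
    by (subst sum.lessThan_Suc_shift) (simp add: funpow_swap1)
  also have "(\<Sum>i<Suc (degree p). s (coeff p i) (T ((T ^^ i) v))) = T (act p v)"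
    by (simp only: act_eq_sum_lessThan[of p "Suc (degree p)"] T.sum T_scale lessI)
  finally show ?thesis .
qed

lemma act_const [simp]: "act [:c:] v = s c v"
  by (simp add: act_pCons)

lemma act_1 [simp]: "act 1 v = v"
  by (simp add: one_pCons act_pCons)

lemma act_linear: "act [:a, b:] v = s a v + s b (T v)"
  by (simp add: act_pCons T_scale)

lemma module_hom_act: "module_hom s s (act p)"
proof
  show "act p (x + y) = act p x + act p y" for x y
    by (induction p) (simp_all add: act_pCons T_add scale_right_distrib algebra_simps)
  show "act p (s c x) = s c (act p x)" for c x
    by (induction p) (simp_all add: act_pCons T_scale scale_right_distrib scale_left_commute mult.commute)
qed

lemmas act_add_right = module_hom.add[OF module_hom_act]
  and act_scale_right = module_hom.scale[OF module_hom_act]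
  and act_zero_right [simp] = module_hom.zero[OF module_hom_act]
  and act_sum_right = module_hom.sum[OF module_hom_act]

lemma act_add: "act (p + q) v = act p v + act q v"
proof -
  define N where "N = Suc (max (degree p) (degree q))"
  have "degree (p + q) < N" "degree p < N" "degree q < N"
    using degree_add_le_max[of p q] by (auto simp: N_def)
  then show ?thesis
    by (simp add: act_eq_sum_lessThan scale_left_distrib sum.distrib)
qed

lemma act_smult: "act (smult a p) v = s a (act p v)"
  by (induction p) (simp_all add: act_pCons act_add_right scale_right_distrib T_scale)

lemma act_diff: "act (p - q) v = act p v - act q v"
  using act_add[of p "- q" v] act_smult[of "-1" q v] by simp

lemma act_mult: "act (p * q) v = act p (act q v)"
  by (induction p) (simp_all add: act_pCons act_add act_smult)

lemma act_sum: "act (sum g A) v = (\<Sum>x\<in>A. act (g x) v)"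
  by (induction A rule: infinite_finite_induct) (simp_all add: act_add)

lemma act_monom: "act (monom a n) v = s a ((T ^^ n) v)"
proof -
  have "degree (monom a n) < Suc n"
    using degree_monom_le[of a n] by simp
  then have "act (monom a n) v = (\<Sum>i<Suc n. s (coeff (monom a n) i) ((T ^^ i) v))"
    by (rule act_eq_sum_lessThan)
  also have "\<dots> = s a ((T ^^ n) v)"
    by (simp add: coeff_monom sum.delta' if_distrib cong: if_cong)
  finally show ?thesis .
qed

lemma act_linear_power: "act ([:-c, 1:] ^ m) v = ((\<lambda>v. T v - s c v) ^^ m) v"
proof (induction m)
  case (Suc m)
  then show ?case
    by (simp only: power_Suc act_mult funpow.simps o_apply act_linear) (simp add: scale_minus_left)
qed simp

lemma act_commute:
  assumes "module_hom s s S" "\<And>x. S (T x) = T (S x)"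
  shows "S (act p v) = act p (S v)"
  by (induction p)
    (simp_all add: act_pCons assms module_hom.add[OF assms(1)] module_hom.scale[OF assms(1)]
      module_hom.zero[OF assms(1)])

lemma kernels_direct_sum:
  assumes annihilates: "\<And>v. act (p * q) v = 0" and bezout: "u * p + w * q = 1"
  shows "direct_sum UNIV {v. act p v = 0} {v. act q v = 0}"
proof -
  have decompose: "v = act (w * q) v + act (u * p) v" for v
    using act_add[of "u * p" "w * q" v] by (simp add: bezout add.commute)
  have "act p (act (w * q) v) = 0" "act q (act (u * p) v) = 0" for v
    using annihilates[of "act w v"] annihilates[of "act u v"]
    by (simp_all only: act_mult[symmetric] ac_simps)
  then have "UNIV = {a + b |a b. a \<in> {v. act p v = 0} \<and> b \<in> {v. act q v = 0}}"
    using decompose by blast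
  moreover have "x = 0" if "act p x = 0" "act q x = 0" for x
    using decompose[of x] that by (simp add: act_mult)
  ultimately show ?thesis
    unfolding direct_sum_def by auto
qed

end

section \<open>The Casimir operator of an sl(2)-module\<close>

definition shift_coeffs :: "'a::comm_ring_1 poly poly \<Rightarrow> 'a poly poly" where
  "shift_coeffs F = map_poly (\<lambda>a. pcompose a [:-1, 1:]) F"

lemma coeff_shift_coeffs: "coeff (shift_coeffs F) i = pcompose (coeff F i) [:-1, 1:]"
  unfolding shift_coeffs_def by (rule coeff_map_poly) simp

lemma degree_shift_coeffs_le: "degree (shift_coeffs F) \<le> degree F"
  unfolding shift_coeffs_def by (rule map_poly_degree_leq)

locale sl2_rep =
  fixes sc :: "complex \<Rightarrow> 'a::ab_group_add \<Rightarrow> 'a" and e f h :: "'a \<Rightarrow> 'a"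
  assumes sl2: "sl2_module sc e f h"
begin

abbreviation L where "L \<equiv> L0 sc h"

abbreviation Cas where "Cas \<equiv> casimir sc e f h"

sublocale vector_space sc
  using sl2 by (simp add: sl2_module_def)

lemma module_hom_e: "module_hom sc sc e"
  and module_hom_f: "module_hom sc sc f"
  and module_hom_h: "module_hom sc sc h"
  using sl2 by (simp_all add: sl2_module_def module_hom_iff_linear)

sublocale e: module_hom sc sc e by (rule module_hom_e)
sublocale f: module_hom sc sc f by (rule module_hom_f)
sublocale h: module_hom sc sc h by (rule module_hom_h)

lemma scale_two: "sc 2 x = x + x"
  using scale_left_distrib[of 1 1 x] by simp

lemma L_apply: "L v = sc (-1/2) (h v)"
  by (simp add: L0_def)

lemma h_eq_L: "h v = - L v - L v"
proof -
  have "h v = sc (-2) (L v)" by (simp add: L_apply)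
  then show ?thesis by (simp add: scale_two)
qed

sublocale Z: module_endo sc L
  by unfold_locales (simp_all add: L_apply h.add h.scale scale_right_distrib scale_left_commute)

lemma e_L: "e (L v) = L (e v) + e v"
proof -
  have "e (h v) = h (e v) - sc 2 (e v)"
    using sl2 by (simp add: sl2_module_def algebra_simps)
  then have "e (L v) = sc (-1/2) (h (e v)) - sc (-1/2) (sc 2 (e v))"
    by (simp only: L_apply e.scale scale_right_diff_distrib)
  then show ?thesis
    by (simp add: L_apply)
qed

lemma f_L: "f (L v) = L (f v) - f v"
proof -
  have "f (h v) = h (f v) - sc (-2) (f v)"
    using sl2 by (simp add: sl2_module_def algebra_simps)
  then have "f (L v) = sc (-1/2) (h (f v)) - sc (-1/2) (sc (-2) (f v))"
    by (simp only: L_apply f.scale scale_right_diff_distrib)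
  then show ?thesis
    by (simp add: L_apply)
qed

lemma e_f: "e (f v) = f (e v) - L v - L v"
proof -
  have "e (f v) = f (e v) + h v"
    using sl2 by (simp add: sl2_module_def algebra_simps)
  then show ?thesis by (simp add: h_eq_L)
qed

lemma Cas_apply: "Cas v = L (L v) - L v + f (e v)"
  by (simp add: casimir_def Lm1_def L1_def f.neg Z.T.diff)

sublocale C: module_endo sc Cas
  by unfold_locales
    (simp_all add: Cas_apply e.add f.add Z.T_add e.scale f.scale Z.T_scale
      scale_right_diff_distrib scale_right_distrib algebra_simps)

lemma e_Cas: "e (Cas v) = Cas (e v)"
  and f_Cas: "f (Cas v) = Cas (f v)"
  and L_Cas: "L (Cas v) = Cas (L v)"
  by (simp_all add: Cas_apply e_L f_L e_f e.add e.diff f.add f.diff Z.T_add Z.T.diff algebra_simps)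

lemma h_Cas: "h (Cas v) = Cas (h v)"
  by (simp add: h_eq_L L_Cas C.T_add C.T.neg C.T.diff)

lemma poly_act_L: "poly_act sc L = Z.act"
  by (intro ext) (simp add: poly_act_def Z.act_def)

lemma e_Z_act: "e (Z.act p v) = Z.act (pcompose p [:1, 1:]) (e v)"
  by (induction p arbitrary: v)
    (simp_all add: pcompose_pCons Z.act_pCons Z.act_add Z.act_mult Z.act_linear e.add e.scale e_L
      algebra_simps)

lemma Z_act_e: "Z.act p (e v) = e (Z.act (pcompose p [:-1, 1:]) v)"
proof -
  have "pcompose (pcompose p [:-1, 1:]) [:1, 1:] = p"
    by (simp add: pcompose_assoc[symmetric] pcompose_pCons)
  then show ?thesis by (simp add: e_Z_act)
qed

lemma e_f_power:
  assumes "e v = 0"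
  shows "e ((f ^^ Suc j) v) = Z.act [:of_nat (j * Suc j), - 2 * of_nat (Suc j):] ((f ^^ j) v)"
proof (induction j)
  case 0
  show ?case by (simp add: e_f assms Z.act_linear scale_two)
next
  case (Suc j)
  define x where "x = (f ^^ Suc j) v"
  define a b where "a = (of_nat (j * Suc j) :: complex)" and "b = - 2 * (of_nat (Suc j) :: complex)"
  have "e ((f ^^ Suc (Suc j)) v) = f (e x) - L x - L x"
    by (simp add: e_f x_def)
  also have "\<dots> = f (sc a ((f ^^ j) v) + sc b (L ((f ^^ j) v))) - L x - L x"
    using Suc.IH by (simp add: x_def a_def b_def Z.act_linear)
  also have "\<dots> = sc (a - b) x + sc (b - 2) (L x)"
    by (simp add: x_def f.add f.scale f_L scale_left_diff_distrib scale_right_diff_distrib scale_two)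
  also have "\<dots> = Z.act [:of_nat (Suc j * Suc (Suc j)), - 2 * of_nat (Suc (Suc j)):] x"
  proof -
    have "a - b = of_nat (Suc j * Suc (Suc j))" "b - 2 = - 2 * of_nat (Suc (Suc j))"
      by (simp_all add: a_def b_def algebra_simps)
    then show ?thesis by (simp add: Z.act_linear)
  qed
  finally show ?case
    by (simp add: x_def)
qed

lemma module_Z_act: "module Z.act"
  by unfold_locales (simp_all add: Z.act_add_right Z.act_add Z.act_mult)

lemma Cas_Z_act: "Cas (Z.act p v) = Z.act p (Cas v)"
proof (rule Z.act_commute)
  show "module_hom sc sc Cas" by unfold_locales (fact C.T_add C.T_scale)+
qed (rule L_Cas[symmetric])

text \<open>\<open>Z.act p = p(L\<^sub>0)\<close> and \<open>C.act g = g(C)\<close>; \<open>ZC.act F = F(L\<^sub>0, C)\<close> for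
  \<open>F \<in> \<complex>[z][X]\<close>, with \<open>\<complex>[z]\<close> as the ring of scalars acting through \<open>Z.act\<close>.\<close>

sublocale ZC: module_endo Z.act Cas
  by (intro module_endo.intro module_endo_axioms.intro module_Z_act C.T_add Cas_Z_act)

lemma ZC_act_e: "ZC.act F (e v) = e (ZC.act (shift_coeffs F) v)"
proof -
  have Cas_power_e: "(Cas ^^ i) (e v) = e ((Cas ^^ i) v)" for i v
    by (induction i) (simp_all add: e_Cas)
  define N where "N = Suc (degree F)"
  have "degree F < N" "degree (shift_coeffs F) < N"
    using degree_shift_coeffs_le[of F] by (auto simp: N_def)
  then show ?thesis
    by (simp add: ZC.act_eq_sum_lessThan Cas_power_e Z_act_e coeff_shift_coeffs e.sum)
qed

lemma kernel_submodule: "sl2_submodule sc e f h {v. C.act p v = 0}"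
proof -
  have commute: "e (C.act p v) = C.act p (e v)" "f (C.act p v) = C.act p (f v)"
    "h (C.act p v) = C.act p (h v)" for v
    by (simp_all add: C.act_commute[OF module_hom_e e_Cas] C.act_commute[OF module_hom_f f_Cas]
      C.act_commute[OF module_hom_h h_Cas])
  then show ?thesis
    unfolding sl2_submodule_def subspace_def
    by (auto simp: C.act_add_right C.act_scale_right commute[symmetric])
qed

lemma submodule_Z_act:
  assumes "sl2_submodule sc e f h A" "a \<in> A"
  shows "Z.act p a \<in> A"
proof (induction p)
  case (pCons c p)
  have A: "subspace A" "h ` A \<subseteq> A"
    using assms(1) by (simp_all add: sl2_submodule_def)
  with pCons.IH have "L (Z.act p a) \<in> A"
    unfolding L_apply by (intro subspace_scale) auto
  then show ?case
    unfolding Z.act_pCons using A(1) assms(2) by (intro subspace_add subspace_scale)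
qed (use assms(1) in \<open>simp add: sl2_submodule_def subspace_0\<close>)

lemma proj_in_summand:
  assumes "sl2_submodule sc e f h A" "sl2_submodule sc e f h B" "direct_sum UNIV A B" "a \<in> A"
  shows "proj A B a = a"
  using assms proj_unique[OF assms(3)] by (simp add: sl2_submodule_def subspace_0)

lemma proj_sum:
  assumes "sl2_submodule sc e f h A" "sl2_submodule sc e f h B" "direct_sum UNIV A B"
  shows "proj A B (sum g X) = (\<Sum>x\<in>X. proj A B (g x))"
proof -
  have "subspace A" "subspace B"
    using assms by (simp_all add: sl2_submodule_def)
  then show ?thesis
    using module_hom.sum[OF module_hom_proj[OF assms(3), folded module_hom_iff_linear]] by blast
qed

lemma proj_Z_act:
  assumes A: "sl2_submodule sc e f h A" and B: "sl2_submodule sc e f h B"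
    and ds: "direct_sum UNIV A B"
  shows "proj A B (Z.act p v) = Z.act p (proj A B v)"
  using A B submodule_Z_act[OF A] submodule_Z_act[OF B]
  by (intro proj_commute[OF ds _ _ Z.module_hom_act[unfolded module_hom_iff_linear]])
    (auto simp: sl2_submodule_def)

lemma indecomposable_annihilator_nonconstant:
  assumes "indecomposable sc e f h UNIV" "g \<noteq> 0" "\<forall>v. C.act g v = 0"
  shows "degree g \<noteq> 0"
proof
  assume "degree g = 0"
  then obtain c where "g = [:c:]" by (metis degree_eq_zeroE)
  with assms(2,3) have "\<forall>v::'a. v = 0" by auto
  with assms(1) show False
    unfolding indecomposable_def indecomp_wrt_def by auto
qed

lemma indecomposable_coprime_factor_annihilates:
  assumes "indecomposable sc e f h UNIV"
    and annihilates: "\<And>v. C.act (p * q) v = 0" and bezout: "u * p + w * q = 1"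
  shows "(\<forall>v. C.act p v = 0) \<or> (\<forall>v. C.act q v = 0)"
proof -
  have "direct_sum UNIV {v. C.act p v = 0} {v. C.act q v = 0}"
    using annihilates bezout by (rule C.kernels_direct_sum)
  with assms(1) kernel_submodule have "{v. C.act p v = 0} = {0} \<or> {v. C.act q v = 0} = {0}"
    unfolding indecomposable_def indecomp_wrt_def by blast
  moreover have "C.act p (C.act q v) = 0" "C.act q (C.act p v) = 0" for v
    using annihilates[of v] by (simp_all add: C.act_mult[symmetric] mult.commute)
  ultimately show ?thesis by blast
qed

lemma gen_casimir_if_annihilated:
  assumes "m \<ge> 1" "\<And>v. C.act ([:-\<mu>, 1:] ^ m) v = 0"
  shows "gen_casimir sc e f h UNIV"
  unfolding gen_casimir_def sl2_submodule_def
  using assms by (intro conjI exI[of _ \<mu>] exI[of _ m]) (simp_all add: C.act_linear_power)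

end

section \<open>Rational modules\<close>

locale rational_sl2 = sl2_rep +
  assumes rational: "rational sc e f h UNIV"
begin

lemma bij_Z_act: "p \<noteq> 0 \<Longrightarrow> bij (Z.act p)"
  using rational by (simp add: rational_def poly_act_L)

lemma Z_act_eq_0_iff: "p \<noteq> 0 \<Longrightarrow> Z.act p x = 0 \<longleftrightarrow> x = 0"
  using bij_Z_act[of p] bij_is_inj inj_eq Z.act_zero_right by metis

lemma rational_generators:
  "\<exists>S. finite S \<and> (\<forall>u. \<exists>q c. q \<noteq> 0 \<and> Z.act q u = (\<Sum>s\<in>S. Z.act (c s) s))"
  using rational unfolding rational_def poly_act_L by blast

text \<open>Finite dimension over \<open>\<complex>(z)\<close>, with the denominators cleared.\<close>

lemma bounded_dependence:
  "\<exists>d::nat. \<forall>w. \<exists>\<beta>. (\<exists>i\<le>d. \<beta> i \<noteq> 0) \<and> (\<Sum>i\<le>d. Z.act (\<beta> i) (w i)) = 0"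
proof -
  obtain S where S: "finite S" "\<And>u. \<exists>q c. q \<noteq> 0 \<and> Z.act q u = (\<Sum>s\<in>S. Z.act (c s) s)"
    using rational_generators by blast
  have "\<exists>\<beta>. (\<exists>i\<le>card S. \<beta> i \<noteq> 0) \<and> (\<Sum>i\<le>card S. Z.act (\<beta> i) (w i)) = 0" for w
  proof -
    have "\<forall>i. \<exists>q c. q \<noteq> 0 \<and> Z.act q (w i) = (\<Sum>s\<in>S. Z.act (c s) s)"
      using S(2) by blast
    from choice[OF this] obtain q
      where "\<forall>i. \<exists>c. q i \<noteq> 0 \<and> Z.act (q i) (w i) = (\<Sum>s\<in>S. Z.act (c s) s)"
      by blast
    from choice[OF this] obtain c
      where "\<forall>i. q i \<noteq> 0 \<and> Z.act (q i) (w i) = (\<Sum>s\<in>S. Z.act (c i s) s)"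
      by blast
    then have q: "\<And>i. q i \<noteq> 0" and qc: "\<And>i. Z.act (q i) (w i) = (\<Sum>s\<in>S. Z.act (c i s) s)"
      by auto
    define I where "I = {..card S}"
    define Q where "Q i = (\<Prod>l\<in>I - {i}. q l)" for i
    have Q_q: "i \<in> I \<Longrightarrow> Q i * q i = (\<Prod>l\<in>I. q l)" for i
      unfolding Q_def I_def by (simp add: prod.remove mult.commute)
    have "(\<Prod>l\<in>I. q l) \<noteq> 0" using q by (simp add: I_def)
    obtain \<beta> where \<beta>: "\<exists>i\<in>I. \<beta> i \<noteq> 0" "\<forall>s\<in>S. (\<Sum>i\<in>I. \<beta> i * (Q i * c i s)) = 0"
      using exists_nontrivial_relation[OF S(1), of I "\<lambda>i s. Q i * c i s"] by (auto simp: I_def)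
    have "Z.act (\<Prod>l\<in>I. q l) (Z.act (\<beta> i) (w i)) = (\<Sum>s\<in>S. Z.act (\<beta> i * (Q i * c i s)) s)"
      if "i \<in> I" for i
    proof -
      have "Z.act (\<Prod>l\<in>I. q l) (Z.act (\<beta> i) (w i)) = Z.act (\<beta> i * Q i * q i) (w i)"
        by (simp only: Z.act_mult[symmetric] Q_q[OF that, symmetric] ac_simps)
      also have "\<dots> = Z.act (\<beta> i * Q i) (\<Sum>s\<in>S. Z.act (c i s) s)"
        by (simp only: Z.act_mult qc)
      also have "\<dots> = (\<Sum>s\<in>S. Z.act (\<beta> i * (Q i * c i s)) s)"
        by (simp only: Z.act_sum_right Z.act_mult[symmetric] mult.assoc)
      finally show ?thesis .
    qed
    then have "Z.act (\<Prod>l\<in>I. q l) (\<Sum>i\<in>I. Z.act (\<beta> i) (w i))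
        = (\<Sum>i\<in>I. \<Sum>s\<in>S. Z.act (\<beta> i * (Q i * c i s)) s)"
      by (simp add: Z.act_sum_right)
    also have "\<dots> = (\<Sum>s\<in>S. Z.act (\<Sum>i\<in>I. \<beta> i * (Q i * c i s)) s)"
      by (subst sum.swap) (simp add: Z.act_sum)
    also have "\<dots> = 0" using \<beta>(2) by simp
    finally have "(\<Sum>i\<in>I. Z.act (\<beta> i) (w i)) = 0"
      using Z_act_eq_0_iff[OF \<open>(\<Prod>l\<in>I. q l) \<noteq> 0\<close>] by blast
    then show ?thesis using \<beta>(1) by (auto simp: I_def)
  qed
  then show ?thesis by blast
qed

text \<open>Applying \<open>e\<close> lowers the index of each \<open>f\<^sup>i v\<close> by one, with a nonzero linear factor.\<close>

lemma f_powers_independent: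
  assumes "e v = 0" "v \<noteq> 0" "(\<Sum>i\<le>d. Z.act (\<beta> i) ((f ^^ i) v)) = 0"
  shows "\<forall>i\<le>d. \<beta> i = 0"
  using assms(3)
proof (induction d arbitrary: \<beta>)
  case 0
  then show ?case using assms(2) Z_act_eq_0_iff by auto
next
  case (Suc d)
  define \<gamma> where "\<gamma> i = pcompose (\<beta> (Suc i)) [:1, 1:] * [:of_nat (i * Suc i), - 2 * of_nat (Suc i):]" for i
  have split: "(\<Sum>i\<le>Suc d. Z.act (\<beta> i) ((f ^^ i) v))
      = Z.act (\<beta> 0) v + (\<Sum>i\<le>d. Z.act (\<beta> (Suc i)) ((f ^^ Suc i) v))"
    by (simp only: sum.atMost_Suc_shift funpow_0)
  have "e (Z.act (\<beta> (Suc i)) ((f ^^ Suc i) v)) = Z.act (\<gamma> i) ((f ^^ i) v)" for i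
    by (simp only: e_Z_act e_f_power[OF assms(1)] \<gamma>_def Z.act_mult)
  moreover have "e (Z.act (\<beta> 0) v) = 0"
    by (simp add: e_Z_act assms(1))
  ultimately have "e (\<Sum>i\<le>Suc d. Z.act (\<beta> i) ((f ^^ i) v)) = (\<Sum>i\<le>d. Z.act (\<gamma> i) ((f ^^ i) v))"
    unfolding split by (simp only: e.add e.sum add_0_left)
  with Suc.prems have "\<forall>i\<le>d. \<gamma> i = 0" by (intro Suc.IH) simp
  moreover have "\<beta> (Suc i) = 0" if "\<gamma> i = 0" for i
  proof -
    have "coeff [:of_nat (i * Suc i), - 2 * of_nat (Suc i):] 1 \<noteq> (0 :: complex)"
      by (simp del: of_nat_Suc)
    then have "[:of_nat (i * Suc i), - 2 * of_nat (Suc i):] \<noteq> (0 :: complex poly)"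
      by (metis coeff_0)
    with that have "pcompose (\<beta> (Suc i)) [:1, 1:] = 0"
      unfolding \<gamma>_def mult_eq_0_iff by blast
    then show ?thesis by (simp add: pcompose_eq_0_iff)
  qed
  ultimately have \<beta>_Suc: "\<forall>i\<le>d. \<beta> (Suc i) = 0" by blast
  then have "Z.act (\<beta> 0) v = 0" using Suc.prems unfolding split by simp
  then have "\<beta> 0 = 0" using assms(2) Z_act_eq_0_iff by blast
  show ?case
  proof (intro allI impI)
    fix i assume "i \<le> Suc d"
    then show "\<beta> i = 0" using \<beta>_Suc \<open>\<beta> 0 = 0\<close> by (cases i) auto
  qed
qed

lemma e_eq_0_iff: "e v = 0 \<longleftrightarrow> v = 0"
proof
  assume "e v = 0"
  obtain d :: nat where "\<forall>w. \<exists>\<beta>. (\<exists>i\<le>d. \<beta> i \<noteq> 0) \<and> (\<Sum>i\<le>d. Z.act (\<beta> i) (w i)) = 0"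
    using bounded_dependence by blast
  from spec[OF this, of "\<lambda>i. (f ^^ i) v"] obtain \<beta>
    where \<beta>: "\<exists>i\<le>d. \<beta> i \<noteq> 0" "(\<Sum>i\<le>d. Z.act (\<beta> i) ((f ^^ i) v)) = 0"
    by blast
  show "v = 0"
  proof (rule ccontr)
    assume "v \<noteq> 0"
    from f_powers_independent[OF \<open>e v = 0\<close> this \<beta>(2)] \<beta>(1) show False by blast
  qed
qed simp

lemma ex_ZC_annihilator_of_vector: "\<exists>F. F \<noteq> 0 \<and> ZC.act F x = 0"
proof -
  obtain d :: nat where "\<forall>w. \<exists>\<beta>. (\<exists>i\<le>d. \<beta> i \<noteq> 0) \<and> (\<Sum>i\<le>d. Z.act (\<beta> i) (w i)) = 0"
    using bounded_dependence by blast
  from spec[OF this, of "\<lambda>i. (Cas ^^ i) x"] obtain \<beta>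
    where \<beta>: "\<exists>i\<le>d. \<beta> i \<noteq> 0" "(\<Sum>i\<le>d. Z.act (\<beta> i) ((Cas ^^ i) x)) = 0"
    by blast
  define F where "F = (\<Sum>i\<le>d. monom (\<beta> i) i)"
  have coeff_F: "coeff F i = (if i \<le> d then \<beta> i else 0)" for i
    unfolding F_def coeff_sum coeff_monom by (simp add: sum.delta)
  obtain i where "i \<le> d" "\<beta> i \<noteq> 0"
    using \<beta>(1) by blast
  then have "F \<noteq> 0"
    using coeff_F[of i] by auto
  moreover have "ZC.act F x = 0"
    using \<beta>(2) by (simp add: F_def ZC.act_sum ZC.act_monom)
  ultimately show ?thesis by blast
qed

lemma ex_ZC_annihilator_of_finite: "finite S \<Longrightarrow> \<exists>F. F \<noteq> 0 \<and> (\<forall>s\<in>S. ZC.act F s = 0)"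
proof (induction S rule: finite_induct)
  case empty
  show ?case by (intro exI[of _ 1]) simp
next
  case (insert x S)
  then obtain F where F: "F \<noteq> 0" "\<forall>s\<in>S. ZC.act F s = 0" by blast
  obtain G where G: "G \<noteq> 0" "ZC.act G x = 0"
    using ex_ZC_annihilator_of_vector by blast
  have "ZC.act (F * G) x = 0"
    using G by (simp add: ZC.act_mult)
  moreover have "ZC.act (F * G) s = 0" if "s \<in> S" for s
    using F that by (simp add: mult.commute[of F G] ZC.act_mult)
  ultimately show ?case
    using F G by (intro exI[of _ "F * G"]) simp
qed

lemma ex_ZC_annihilator: "\<exists>F. F \<noteq> 0 \<and> (\<forall>v. ZC.act F v = 0)"
proof -
  obtain S where S: "finite S" "\<And>u. \<exists>q c. q \<noteq> 0 \<and> Z.act q u = (\<Sum>s\<in>S. Z.act (c s) s)"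
    using rational_generators by blast
  obtain F where F: "F \<noteq> 0" "\<forall>s\<in>S. ZC.act F s = 0"
    using ex_ZC_annihilator_of_finite[OF S(1)] by blast
  have "ZC.act F u = 0" for u
  proof -
    obtain q c where q: "q \<noteq> 0" "Z.act q u = (\<Sum>s\<in>S. Z.act (c s) s)"
      using S(2) by blast
    have "Z.act q (ZC.act F u) = (\<Sum>s\<in>S. Z.act (c s) (ZC.act F s))"
      by (simp only: ZC.act_scale_right[symmetric] q(2) ZC.act_sum_right)
    also have "\<dots> = 0"
      using F(2) by simp
    finally show ?thesis
      using Z_act_eq_0_iff[OF q(1)] by blast
  qed
  with F(1) show ?thesis by blast
qed

text \<open>Twisting by \<open>e\<close> replaces \<open>z\<close> by \<open>z - 1\<close> in the coefficients of an annihilator;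
  for one of minimal degree this forces all its coefficients to be proportional.\<close>

lemma minimal_ZC_annihilator_coeffs_proportional:
  assumes F0: "F \<noteq> 0" and ann: "\<And>v. ZC.act F v = 0"
    and minimal: "\<And>G. G \<noteq> 0 \<Longrightarrow> \<forall>v. ZC.act G v = 0 \<Longrightarrow> degree F \<le> degree G"
  shows "\<exists>c. coeff F i = smult c (lead_coeff F)"
proof -
  define k lc where "k = degree F" and "lc = lead_coeff F"
  have "lc \<noteq> 0" using F0 by (simp add: lc_def)
  have shift_ann: "ZC.act (shift_coeffs F) v = 0" for v
    using ann[of "e v"] by (simp add: ZC_act_e e_eq_0_iff)
  define G where "G = smult (coeff (shift_coeffs F) k) F - smult lc (shift_coeffs F)"
  have G_ann: "\<forall>v. ZC.act G v = 0"
    by (simp add: G_def ZC.act_diff ZC.act_smult ann shift_ann)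
  have degree_G: "degree G \<le> k"
    unfolding G_def using degree_shift_coeffs_le[of F]
    by (intro degree_diff_le order.trans[OF degree_smult_le]) (simp_all add: k_def)
  have coeff_G: "coeff G k = 0"
    by (simp add: G_def lc_def k_def)
  have "G = 0"
  proof (rule ccontr)
    assume "G \<noteq> 0"
    with minimal G_ann have "k \<le> degree G" by (simp add: k_def)
    with degree_G coeff_G have "lead_coeff G = 0" by simp
    with \<open>G \<noteq> 0\<close> show False by simp
  qed
  then have "coeff G i = 0" by simp
  then have "pcompose lc [:-1, 1:] * coeff F i = lc * pcompose (coeff F i) [:-1, 1:]"
    by (simp add: G_def coeff_shift_coeffs lc_def k_def mult.commute)
  with \<open>lc \<noteq> 0\<close> show ?thesis
    unfolding lc_def by (rule shift_invariant_quotient_const)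
qed

lemma ex_Casimir_annihilator: "\<exists>g. g \<noteq> 0 \<and> (\<forall>v. C.act g v = 0)"
proof -
  obtain F0 where "F0 \<noteq> 0 \<and> (\<forall>v. ZC.act F0 v = 0)"
    using ex_ZC_annihilator by blast
  from ex_has_least_nat[where P = "\<lambda>F. F \<noteq> 0 \<and> (\<forall>v. ZC.act F v = 0)" and m = degree, OF this]
  obtain F
    where F: "F \<noteq> 0" "\<forall>v. ZC.act F v = 0"
      and minimal: "\<And>G. G \<noteq> 0 \<Longrightarrow> \<forall>v. ZC.act G v = 0 \<Longrightarrow> degree F \<le> degree G"
    by blast
  define lc where "lc = lead_coeff F"
  have "lc \<noteq> 0" using F(1) by (simp add: lc_def)
  have "\<exists>c. coeff F i = smult c lc" for i
    unfolding lc_def using F minimal by (intro minimal_ZC_annihilator_coeffs_proportional) auto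
  with \<open>lc \<noteq> 0\<close> obtain g
    where "degree g \<le> degree F" and coeff_F: "\<And>i. coeff F i = smult (coeff g i) lc"
    by (metis proportional_coeffs_factor)
  have "g \<noteq> 0"
  proof
    assume "g = 0"
    then have "coeff F i = 0" for i using coeff_F by simp
    with F(1) show False by (simp add: poly_eq_iff)
  qed
  moreover have "C.act g v = 0" for v
  proof -
    define N where "N = Suc (degree F)"
    have "degree F < N" "degree g < N"
      using \<open>degree g \<le> degree F\<close>
      by (simp_all add: N_def)
    then have "ZC.act F v = (\<Sum>i<N. Z.act (smult (coeff g i) lc) ((Cas ^^ i) v))"
      by (simp only: ZC.act_eq_sum_lessThan coeff_F)
    also have "\<dots> = Z.act lc (C.act g v)"
      using \<open>degree g < N\<close>
      by (simp only: Z.act_smult Z.act_scale_right Z.act_sum_right C.act_eq_sum_lessThan)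
    finally have "Z.act lc (C.act g v) = 0"
      using F(2) by simp
    then show ?thesis
      using Z_act_eq_0_iff[OF \<open>lc \<noteq> 0\<close>] by blast
  qed
  ultimately show ?thesis by blast
qed

lemma indecomposable_imp_gen_casimir:
  assumes "indecomposable sc e f h UNIV"
  shows "gen_casimir sc e f h UNIV"
proof -
  obtain g0 where "g0 \<noteq> 0 \<and> (\<forall>v. C.act g0 v = 0)"
    using ex_Casimir_annihilator by blast
  from ex_has_least_nat[where P = "\<lambda>g. g \<noteq> 0 \<and> (\<forall>v. C.act g v = 0)" and m = degree, OF this]
  obtain g
    where g: "g \<noteq> 0" "\<forall>v. C.act g v = 0"
      and minimal: "\<And>p. p \<noteq> 0 \<Longrightarrow> \<forall>v. C.act p v = 0 \<Longrightarrow> degree g \<le> degree p"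
    by blast
  have "degree g \<noteq> 0"
    using assms g by (rule indecomposable_annihilator_nonconstant)
  then have "\<not> constant (poly g)"
    by (simp add: constant_degree)
  then obtain \<mu> where "poly g \<mu> = 0"
    using fundamental_theorem_of_algebra by blast
  define m where "m = order \<mu> g"
  define A where "A = [:-\<mu>, 1:] ^ m"
  obtain r where g_eq: "g = A * r" and "\<not> [:-\<mu>, 1:] dvd r"
    using order_decomp[OF g(1)] unfolding A_def m_def by blast
  have "m \<ge> 1"
    using \<open>poly g \<mu> = 0\<close> g(1) order_root[of g \<mu>] by (simp add: m_def)
  have "r \<noteq> 0" using g(1) g_eq by auto
  have "poly r \<mu> \<noteq> 0"
    using \<open>\<not> [:-\<mu>, 1:] dvd r\<close> by (simp add: poly_eq_0_iff_dvd)
  then obtain u w where bezout: "u * A + w * r = 1"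
    using bezout_linear_power[of r \<mu> m] unfolding A_def by blast
  have "(\<forall>v. C.act A v = 0) \<or> (\<forall>v. C.act r v = 0)"
    using g(2) unfolding g_eq by (intro indecomposable_coprime_factor_annihilates[OF assms _ bezout]) simp
  moreover have "\<not> (\<forall>v. C.act r v = 0)"
  proof
    assume "\<forall>v. C.act r v = 0"
    with minimal[OF \<open>r \<noteq> 0\<close>] have "degree g \<le> degree r" by blast
    moreover have "degree g = m + degree r"
      using \<open>r \<noteq> 0\<close> by (simp add: g_eq A_def degree_mult_eq degree_linear_power)
    ultimately show False using \<open>m \<ge> 1\<close> by simp
  qed
  ultimately show ?thesis
    using \<open>m \<ge> 1\<close> unfolding A_def by (blast intro: gen_casimir_if_annihilated)
qed

lemma bij_betw_Z_act_summand:
  assumes A: "sl2_submodule sc e f h A" and B: "sl2_submodule sc e f h B"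
    and ds: "direct_sum UNIV A B" and "p \<noteq> 0"
  shows "bij_betw (Z.act p) A A"
proof (rule bij_betw_imageI)
  show "inj_on (Z.act p) A"
    using bij_is_inj[OF bij_Z_act[OF \<open>p \<noteq> 0\<close>]] by (rule inj_on_subset) simp
  have "a \<in> Z.act p ` A" if "a \<in> A" for a
  proof -
    obtain x where "a = Z.act p x"
      using bij_Z_act[OF \<open>p \<noteq> 0\<close>] unfolding bij_def surj_def by blast
    then have "proj A B a = Z.act p (proj A B x)"
      by (simp add: proj_Z_act[OF A B ds])
    moreover have "proj A B a = a" "proj A B x \<in> A"
      using proj_in_summand[OF A B ds that] proj_direct_sum[OF ds] by simp_all
    ultimately show ?thesis by (metis image_eqI)
  qed
  then show "Z.act p ` A = A"
    using submodule_Z_act[OF A] by blast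
qed

lemma summand_generators:
  assumes A: "sl2_submodule sc e f h A" and B: "sl2_submodule sc e f h B"
    and ds: "direct_sum UNIV A B"
  shows "\<exists>S. finite S \<and> S \<subseteq> A \<and>
    (\<forall>u\<in>A. \<exists>q c. q \<noteq> 0 \<and> Z.act q u = (\<Sum>s\<in>S. Z.act (c s) s))"
proof -
  obtain S where S: "finite S" "\<And>u. \<exists>q c. q \<noteq> 0 \<and> Z.act q u = (\<Sum>s\<in>S. Z.act (c s) s)"
    using rational_generators by blast
  have "\<exists>q c. q \<noteq> 0 \<and> Z.act q u = (\<Sum>t\<in>proj A B ` S. Z.act (c t) t)" if "u \<in> A" for u
  proof -
    obtain q c where q: "q \<noteq> 0" "Z.act q u = (\<Sum>s\<in>S. Z.act (c s) s)"
      using S(2) by blast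
    have "Z.act q u = proj A B (Z.act q u)"
      using proj_in_summand[OF A B ds submodule_Z_act[OF A that]] by simp
    also have "\<dots> = (\<Sum>s\<in>S. Z.act (c s) (proj A B s))"
      by (simp add: q(2) proj_sum[OF A B ds] proj_Z_act[OF A B ds])
    also have "\<dots> = (\<Sum>t\<in>proj A B ` S. \<Sum>s\<in>{s\<in>S. proj A B s = t}. Z.act (c s) (proj A B s))"
      by (rule sum.image_gen[OF S(1)])
    also have "\<dots> = (\<Sum>t\<in>proj A B ` S. Z.act (\<Sum>s\<in>{s\<in>S. proj A B s = t}. c s) t)"
      by (simp add: Z.act_sum)
    finally show ?thesis
      using q(1) by (intro exI[of _ q] exI[of _ "\<lambda>t. \<Sum>s\<in>{s\<in>S. proj A B s = t}. c s"]) simp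
  qed
  moreover have "finite (proj A B ` S)" "proj A B ` S \<subseteq> A"
    using S(1) proj_direct_sum[OF ds] by auto
  ultimately show ?thesis by blast
qed

lemma direct_summand_rational:
  assumes "sl2_submodule sc e f h A" "sl2_submodule sc e f h B" "direct_sum UNIV A B"
  shows "rational sc e f h A"
  using assms bij_betw_Z_act_summand[OF assms] summand_generators[OF assms]
  unfolding rational_def poly_act_L by blast

lemma indecomposable_iff_R_indecomposable:
  "indecomposable sc e f h UNIV \<longleftrightarrow> R_indecomposable sc e f h UNIV"
proof -
  have "sl2_submodule sc e f h A \<and> sl2_submodule sc e f h B \<longleftrightarrow>
      rational sc e f h A \<and> rational sc e f h B" if "direct_sum UNIV A B" for A B
    using direct_summand_rational[OF _ _ that] direct_summand_rational[OF _ _ direct_sum_sym[OF that]]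
    by (auto simp: rational_def)
  then show ?thesis
    unfolding indecomposable_def R_indecomposable_def by (rule indecomp_wrt_cong)
qed

lemma R_indecomposable_iff_RC_indecomposable:
  assumes "gen_casimir sc e f h UNIV"
  shows "R_indecomposable sc e f h UNIV \<longleftrightarrow> RC_indecomposable sc e f h UNIV"
proof -
  have "gen_casimir sc e f h A" if "rational sc e f h A" for A
    using assms that unfolding gen_casimir_def rational_def by blast
  then show ?thesis
    unfolding R_indecomposable_def RC_indecomposable_def by (intro indecomp_wrt_cong) blast
qed

end

theorem proposition6p10:
  fixes sc :: "complex \<Rightarrow> 'v::ab_group_add \<Rightarrow> 'v"
    and e f h :: "'v \<Rightarrow> 'v"
  assumes "sl2_module sc e f h"
    and "rational sc e f h UNIV"
  shows "(indecomposable sc e f h UNIV \<longleftrightarrow> R_indecomposable sc e f h UNIV)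
    \<and> (indecomposable sc e f h UNIV \<longrightarrow> gen_casimir sc e f h UNIV)
    \<and> (R_indecomposable sc e f h UNIV \<longleftrightarrow>
         (gen_casimir sc e f h UNIV \<and> RC_indecomposable sc e f h UNIV))
    \<and> ((gen_casimir sc e f h UNIV \<and> RC_indecomposable sc e f h UNIV) \<longleftrightarrow>
         (gen_casimir sc e f h UNIV \<and> indecomposable sc e f h UNIV))"
proof -
  interpret rational_sl2 sc e f h
    using assms by (intro rational_sl2.intro sl2_rep.intro rational_sl2_axioms.intro)
  show ?thesis
    using indecomposable_iff_R_indecomposable indecomposable_imp_gen_casimir
      R_indecomposable_iff_RC_indecomposable
    by blast
qed

end
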